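(* Let $0<\omega\le\pi/2$ and let $\mathcal{O}$ be a convex polygon with exactly $3$ narrow vertices. Then for every valid $\omega$-probe $\mathcal{W}(\omega,q,H_1,H_2)$ of $\mathcal{O}$, at least one of the rays $H_1,H_2$ contains a narrow vertex of $\mathcal{O}$.
   Context: A vertex of a convex polygon $\mathcal{O}$ is a narrow vertex if the internal angle of $\mathcal{O}$ at that vertex is at most $\omega$. An $\omega$-wedge $\mathcal{W}(\omega,q,H_1,H_2)$ is the closed region formed by a point $q$ (the apex), two rays $H_1,H_2$ emanating from $q$ with angle $\omega$ between them such that $H_2$ is obtained from $H_1$ by a counterclockwise rotation by $\omega$, and all points between them. A valid $\omega$-probe of $\mathcal{O}$ is an $\omega$-wedge containing $\mathcal{O}$ such that each of $H_1$ and $H_2$ contains at least one point of $\mathcal{O}$. *)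

theory Defs
  imports "HOL-Analysis.Analysis"
begin

text \<open>A convex polygon is given by
  its list of vertices in counterclockwise order; strict convexity means every
  other vertex lies strictly to the left of each directed edge.\<close>

definition cross2 :: "complex \<Rightarrow> complex \<Rightarrow> real" where
  "cross2 a b = Im (cnj a * b)"

definition vec_angle :: "complex \<Rightarrow> complex \<Rightarrow> real" where
  "vec_angle u v = arccos ((u \<bullet> v) / (norm u * norm v))"

definition convex_polygon :: "complex list \<Rightarrow> bool" where
  "convex_polygon vs \<longleftrightarrow> length vs \<ge> 3 \<and> distinct vs \<and>
     (\<forall>i < length vs. \<forall>j < length vs. j \<noteq> i \<and> j \<noteq> Suc i mod length vs \<longrightarrow>
        cross2 (vs ! (Suc i mod length vs) - vs ! i) (vs ! j - vs ! i) > 0)"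

definition polygon_region :: "complex list \<Rightarrow> complex set" where
  "polygon_region vs = convex hull (set vs)"

definition prev_idx :: "complex list \<Rightarrow> nat \<Rightarrow> nat" where
  "prev_idx vs i = (i + length vs - 1) mod length vs"

definition next_idx :: "complex list \<Rightarrow> nat \<Rightarrow> nat" where
  "next_idx vs i = Suc i mod length vs"

definition internal_angle :: "complex list \<Rightarrow> nat \<Rightarrow> real" where
  "internal_angle vs i =
     vec_angle (vs ! prev_idx vs i - vs ! i) (vs ! next_idx vs i - vs ! i)"

definition narrow_vertex :: "real \<Rightarrow> complex list \<Rightarrow> nat \<Rightarrow> bool" where
  "narrow_vertex \<omega> vs i \<longleftrightarrow> i < length vs \<and> internal_angle vs i \<le> \<omega>"

definition ray :: "complex \<Rightarrow> complex \<Rightarrow> complex set" where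
  "ray q d = {q + of_real t * d | t. t \<ge> 0}"

text \<open>The \<omega>-wedge with apex q, first ray in direction d (nonzero) and second ray
  obtained by counterclockwise rotation by \<omega> (for 0 < \<omega> < pi this is the
  closed region between the two rays).\<close>
definition wedge :: "real \<Rightarrow> complex \<Rightarrow> complex \<Rightarrow> complex set" where
  "wedge \<omega> q d = {q + of_real s * d + of_real t * (d * cis \<omega>) | s t. s \<ge> 0 \<and> t \<ge> 0}"

definition valid_probe :: "real \<Rightarrow> complex list \<Rightarrow> complex \<Rightarrow> complex \<Rightarrow> bool" where
  "valid_probe \<omega> vs q d \<longleftrightarrow> d \<noteq> 0 \<and>
     polygon_region vs \<subseteq> wedge \<omega> q d \<and>
     ray q d \<inter> polygon_region vs \<noteq> {} \<and>
     ray q (d * cis \<omega>) \<inter> polygon_region vs \<noteq> {}"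

end

theory Submission
  imports Defs
begin

text \<open>The outward directions for which a vertex of a convex polygon is the unique
  maximiser form an open arc whose length is the exterior angle at that vertex, and the arcs
  of distinct vertices are disjoint.  Parametrise directions as \<open>-\<i> d cis \<phi>\<close>, so that
  \<open>\<phi> = 0\<close> and \<open>\<phi> = \<pi> + \<omega>\<close> are the outward normals of the two rays of the probe.  A vertex
  maximising one of these two directions lies on the corresponding ray, because both rays
  meet the polygon.  Hence the arc of a narrow vertex lying on neither ray has length at least
  \<open>\<pi> - \<omega>\<close> and sits inside \<open>(0, \<pi> + \<omega>)\<close>; three disjoint such arcs force
  \<open>3 (\<pi> - \<omega>) < \<pi> + \<omega>\<close>, i.e. \<open>\<omega> > \<pi>/2\<close>.\<close>

lemma cross2_eq_inner: "cross2 a b = (\<i> * a) \<bullet> b"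
  by (simp add: cross2_def inner_complex_def)

lemma cross2_antisym: "cross2 a b = - cross2 b a"
  by (simp add: cross2_def algebra_simps)

lemma cross2_cone_decomposition:
  assumes "cross2 u v \<noteq> 0"
  shows "w = of_real (cross2 w v / cross2 u v) * u + of_real (cross2 u w / cross2 u v) * v"
proof -
  have "of_real (cross2 u v) * w = of_real (cross2 w v) * u + of_real (cross2 u w) * v"
    by (simp add: cross2_def complex_eq_iff algebra_simps)
  then have "of_real (1 / cross2 u v) * (of_real (cross2 u v) * w) =
      of_real (1 / cross2 u v) * (of_real (cross2 w v) * u + of_real (cross2 u w) * v)"
    by simp
  then show ?thesis
    using assms by (simp add: distrib_left mult.assoc[symmetric] flip: of_real_mult)
qed

lemma Im_divide_cross2: "Im (b / a) = cross2 a b / (cmod a)^2"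
  unfolding cmod_power2 by (simp add: cross2_def Im_divide power2_eq_square algebra_simps)

lemma inner_scaled_cis: "z \<bullet> (z * (of_real c * cis s)) = (cmod z)^2 * c * cos s"
  unfolding cmod_power2 by (simp add: inner_complex_def power2_eq_square algebra_simps)

lemma inner_normal_scaled_cis:
  "(- (\<i> * z * cis t)) \<bullet> (z * (of_real c * cis s)) = - ((cmod z)^2 * c * sin (s - t))"
  unfolding cmod_power2 by (simp add: inner_complex_def power2_eq_square sin_diff algebra_simps)

lemma prev_next_idx:
  assumes "3 \<le> length vs" "i < length vs"
  shows "prev_idx vs i < length vs" "next_idx vs i < length vs"
    "prev_idx vs i \<noteq> i" "next_idx vs i \<noteq> i" "prev_idx vs i \<noteq> next_idx vs i"
    "next_idx vs (prev_idx vs i) = i"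
proof -
  have prev: "prev_idx vs i = (if i = 0 then length vs - 1 else i - 1)"
    using assms by (auto simp: prev_idx_def mod_if)
  have "next_idx vs i = (if Suc i = length vs then 0 else Suc i)"
    using assms(2) by (simp add: next_idx_def)
  with prev assms show "prev_idx vs i < length vs" "next_idx vs i < length vs"
    "prev_idx vs i \<noteq> i" "next_idx vs i \<noteq> i" "prev_idx vs i \<noteq> next_idx vs i"
    "next_idx vs (prev_idx vs i) = i"
    by (auto simp: next_idx_def)
qed

definition vertex_maximizes :: "complex list \<Rightarrow> nat \<Rightarrow> complex \<Rightarrow> bool" where
  "vertex_maximizes vs i n \<longleftrightarrow> (\<forall>j < length vs. n \<bullet> vs ! j \<le> n \<bullet> vs ! i)"

definition vertex_strictly_maximizes :: "complex list \<Rightarrow> nat \<Rightarrow> complex \<Rightarrow> bool" where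
  "vertex_strictly_maximizes vs i n \<longleftrightarrow> (\<forall>j < length vs. j \<noteq> i \<longrightarrow> n \<bullet> vs ! j < n \<bullet> vs ! i)"

lemma convex_polygon_cross2_pos:
  assumes "convex_polygon vs" "k < length vs" "j < length vs" "j \<noteq> k" "j \<noteq> next_idx vs k"
  shows "cross2 (vs ! next_idx vs k - vs ! k) (vs ! j - vs ! k) > 0"
  using assms by (simp add: convex_polygon_def next_idx_def)

lemma convex_polygon_edges_nonzero:
  assumes "convex_polygon vs" "i < length vs"
  shows "vs ! i - vs ! prev_idx vs i \<noteq> 0" "vs ! next_idx vs i - vs ! i \<noteq> 0"
proof -
  have "3 \<le> length vs" "distinct vs" using assms(1) by (simp_all add: convex_polygon_def)
  with prev_next_idx[OF _ assms(2)] assms(2) show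
    "vs ! i - vs ! prev_idx vs i \<noteq> 0" "vs ! next_idx vs i - vs ! i \<noteq> 0"
    by (auto simp: nth_eq_iff_index_eq)
qed

lemma convex_polygon_edge_cone:
  assumes cv: "convex_polygon vs" and i: "i < length vs" and j: "j < length vs"
    and "j \<noteq> i" "j \<noteq> prev_idx vs i" "j \<noteq> next_idx vs i"
  obtains \<alpha> \<beta> where "\<alpha> > 0" "\<beta> > 0"
    "vs ! j - vs ! i = of_real \<alpha> * (vs ! prev_idx vs i - vs ! i) + of_real \<beta> * (vs ! next_idx vs i - vs ! i)"
proof -
  let ?P = "vs ! prev_idx vs i" and ?A = "vs ! i" and ?N = "vs ! next_idx vs i"
  define u v w where "u = ?P - ?A" and "v = ?N - ?A" and "w = vs ! j - ?A"
  have len: "3 \<le> length vs" using cv by (simp add: convex_polygon_def)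
  note idx = prev_next_idx[OF len i]
  have "cross2 v u > 0"
    using convex_polygon_cross2_pos[OF cv i idx(1,3,5)] by (simp add: u_def v_def)
  then have uv: "cross2 u v < 0" by (simp add: cross2_antisym[of u])
  have "cross2 v w > 0"
    using convex_polygon_cross2_pos[OF cv i j] assms(4,6) by (simp add: v_def w_def)
  then have wv: "cross2 w v < 0" by (simp add: cross2_antisym[of w])
  have "cross2 (?A - ?P) (vs ! j - ?P) > 0"
    using convex_polygon_cross2_pos[OF cv idx(1) j] assms(4,5) idx(6) by simp
  then have uw: "cross2 u w < 0" by (simp add: u_def w_def cross2_def algebra_simps)
  show ?thesis
  proof (rule that)
    show "cross2 w v / cross2 u v > 0" "cross2 u w / cross2 u v > 0"
      using uv wv uw by (simp_all add: divide_neg_neg)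
    show "vs ! j - ?A = of_real (cross2 w v / cross2 u v) * (?P - ?A)
        + of_real (cross2 u w / cross2 u v) * (?N - ?A)"
      using cross2_cone_decomposition[of u v w] uv by (simp add: u_def v_def w_def)
  qed
qed

lemma inner_edge_cone:
  assumes "w = of_real \<alpha> * u + of_real \<beta> * v"
  shows "n \<bullet> w = \<alpha> * (n \<bullet> u) + \<beta> * (n \<bullet> v)"
  using assms by (simp add: inner_add_right flip: scaleR_conv_of_real)

lemma vertex_maximizes_if_edges:
  assumes cv: "convex_polygon vs" and i: "i < length vs"
    and at_prev: "n \<bullet> vs ! prev_idx vs i \<le> n \<bullet> vs ! i"
    and at_next: "n \<bullet> vs ! next_idx vs i \<le> n \<bullet> vs ! i"
  shows "vertex_maximizes vs i n"
  unfolding vertex_maximizes_def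
proof (intro allI impI)
  let ?P = "vs ! prev_idx vs i" and ?A = "vs ! i" and ?N = "vs ! next_idx vs i"
  fix j assume j: "j < length vs"
  show "n \<bullet> vs ! j \<le> n \<bullet> ?A"
  proof (cases "j \<in> {i, prev_idx vs i, next_idx vs i}")
    case False
    then obtain \<alpha> \<beta> where "\<alpha> > 0" "\<beta> > 0"
      and decomp: "vs ! j - ?A = of_real \<alpha> * (?P - ?A) + of_real \<beta> * (?N - ?A)"
      using convex_polygon_edge_cone[OF cv i j] by blast
    from decomp have "n \<bullet> (vs ! j - ?A) = \<alpha> * (n \<bullet> (?P - ?A)) + \<beta> * (n \<bullet> (?N - ?A))"
      by (rule inner_edge_cone)
    moreover have "\<alpha> * (n \<bullet> (?P - ?A)) \<le> 0" "\<beta> * (n \<bullet> (?N - ?A)) \<le> 0"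
      using at_prev at_next \<open>\<alpha> > 0\<close> \<open>\<beta> > 0\<close> by (simp_all add: inner_diff_right mult_nonneg_nonpos)
    ultimately show ?thesis by (simp add: inner_diff_right)
  qed (use at_prev at_next in auto)
qed

lemma vertex_strictly_maximizes_if_edges:
  assumes cv: "convex_polygon vs" and i: "i < length vs"
    and at_prev: "n \<bullet> vs ! prev_idx vs i < n \<bullet> vs ! i"
    and at_next: "n \<bullet> vs ! next_idx vs i < n \<bullet> vs ! i"
  shows "vertex_strictly_maximizes vs i n"
  unfolding vertex_strictly_maximizes_def
proof (intro allI impI)
  let ?P = "vs ! prev_idx vs i" and ?A = "vs ! i" and ?N = "vs ! next_idx vs i"
  fix j assume j: "j < length vs" "j \<noteq> i"
  show "n \<bullet> vs ! j < n \<bullet> ?A"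
  proof (cases "j \<in> {prev_idx vs i, next_idx vs i}")
    case False
    then obtain \<alpha> \<beta> where "\<alpha> > 0" "\<beta> > 0"
      and decomp: "vs ! j - ?A = of_real \<alpha> * (?P - ?A) + of_real \<beta> * (?N - ?A)"
      using convex_polygon_edge_cone[OF cv i j(1)] j(2) by blast
    from decomp have "n \<bullet> (vs ! j - ?A) = \<alpha> * (n \<bullet> (?P - ?A)) + \<beta> * (n \<bullet> (?N - ?A))"
      by (rule inner_edge_cone)
    moreover have "\<alpha> * (n \<bullet> (?P - ?A)) < 0" "\<beta> * (n \<bullet> (?N - ?A)) < 0"
      using at_prev at_next \<open>\<alpha> > 0\<close> \<open>\<beta> > 0\<close> by (simp_all add: inner_diff_right mult_pos_neg)
    ultimately show ?thesis by (simp add: inner_diff_right)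
  qed (use at_prev at_next in auto)
qed

lemma vertex_maximizes_polygon_region:
  assumes "vertex_maximizes vs i n" "x \<in> polygon_region vs"
  shows "n \<bullet> x \<le> n \<bullet> vs ! i"
proof -
  have "set vs \<subseteq> {x. n \<bullet> x \<le> n \<bullet> vs ! i}"
    using assms(1) by (auto simp: vertex_maximizes_def in_set_conv_nth)
  then have "convex hull (set vs) \<subseteq> {x. n \<bullet> x \<le> n \<bullet> vs ! i}"
    by (intro hull_minimal convex_halfspace_le)
  then show ?thesis using assms(2) by (auto simp: polygon_region_def)
qed

lemma vertex_maximizes_scale:
  "0 < c \<Longrightarrow> vertex_maximizes vs i (of_real c * n) \<longleftrightarrow> vertex_maximizes vs i n"
  by (simp add: vertex_maximizes_def flip: scaleR_conv_of_real)

lemma vertex_strictly_maximizes_scale: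
  "0 < c \<Longrightarrow> vertex_strictly_maximizes vs i (of_real c * n) \<longleftrightarrow> vertex_strictly_maximizes vs i n"
  by (simp add: vertex_strictly_maximizes_def flip: scaleR_conv_of_real)

lemma vertex_strictly_maximizes_unique:
  assumes "vertex_strictly_maximizes vs i n" "vertex_strictly_maximizes vs k n"
    "i < length vs" "k < length vs"
  shows "i = k"
  using assms by (force simp: vertex_strictly_maximizes_def)

definition turn_angle :: "complex list \<Rightarrow> nat \<Rightarrow> real" where
  "turn_angle vs i = Arg ((vs ! next_idx vs i - vs ! i) / (vs ! i - vs ! prev_idx vs i))"

lemma turn_angle_bounds:
  assumes cv: "convex_polygon vs" and i: "i < length vs"
  shows "0 < turn_angle vs i" "turn_angle vs i < pi"
proof -
  let ?P = "vs ! prev_idx vs i" and ?A = "vs ! i" and ?N = "vs ! next_idx vs i"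
  have "3 \<le> length vs" using cv by (simp add: convex_polygon_def)
  note idx = prev_next_idx[OF this i]
  have "cross2 (?A - ?P) (?N - ?A) = cross2 (?N - ?A) (?P - ?A)"
    by (simp add: cross2_def algebra_simps)
  also have "\<dots> > 0" using convex_polygon_cross2_pos[OF cv i idx(1,3,5)] .
  finally have "Im ((?N - ?A) / (?A - ?P)) > 0"
    using convex_polygon_edges_nonzero[OF cv i] by (simp add: Im_divide_cross2)
  then show "0 < turn_angle vs i" "turn_angle vs i < pi"
    unfolding turn_angle_def using Arg_lt_pi by blast+
qed

lemma next_edge_turn:
  assumes "convex_polygon vs" "i < length vs"
  obtains c where "c > 0"
    "vs ! next_idx vs i - vs ! i = (vs ! i - vs ! prev_idx vs i) * (of_real c * cis (turn_angle vs i))"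
proof
  let ?e = "vs ! i - vs ! prev_idx vs i" and ?f = "vs ! next_idx vs i - vs ! i"
  have e: "?e \<noteq> 0" and f: "?f \<noteq> 0" using convex_polygon_edges_nonzero[OF assms] by simp_all
  show "cmod (?f / ?e) > 0" using e f by simp
  have "?f = ?e * (?f / ?e)" using e by (simp add: field_simps)
  also have "?f / ?e = of_real (cmod (?f / ?e)) * cis (turn_angle vs i)"
    using rcis_cmod_Arg[of "?f / ?e"] unfolding rcis_def turn_angle_def by (rule sym)
  finally show "?f = ?e * (of_real (cmod (?f / ?e)) * cis (turn_angle vs i))" .
qed

lemma internal_angle_turn_angle:
  assumes cv: "convex_polygon vs" and i: "i < length vs"
  shows "internal_angle vs i = pi - turn_angle vs i"
proof -
  let ?e = "vs ! i - vs ! prev_idx vs i" and ?\<delta> = "turn_angle vs i"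
  obtain c where c: "c > 0" and next_edge: "vs ! next_idx vs i - vs ! i = ?e * (of_real c * cis ?\<delta>)"
    using next_edge_turn[OF cv i] by blast
  have e: "cmod ?e > 0" using convex_polygon_edges_nonzero[OF cv i] by simp
  have "(vs ! prev_idx vs i - vs ! i) \<bullet> (vs ! next_idx vs i - vs ! i) = - ((cmod ?e)^2 * c * cos ?\<delta>)"
    by (metis inner_minus_left inner_scaled_cis minus_diff_eq next_edge)
  moreover have "norm (vs ! prev_idx vs i - vs ! i) = cmod ?e"
    by (rule norm_minus_commute)
  moreover have "norm (vs ! next_idx vs i - vs ! i) = cmod ?e * c"
    using c by (simp add: next_edge norm_mult)
  ultimately have "internal_angle vs i = arccos (- cos ?\<delta>)"
    using c e by (simp add: internal_angle_def vec_angle_def power2_eq_square)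
  also have "\<dots> = arccos (cos (pi - ?\<delta>))" by simp
  also have "\<dots> = pi - ?\<delta>"
    using turn_angle_bounds[OF cv i] by (intro arccos_cos) auto
  finally show ?thesis .
qed

lemma inner_normal_edges:
  fixes t :: real
  assumes cv: "convex_polygon vs" and i: "i < length vs"
  defines "e \<equiv> vs ! i - vs ! prev_idx vs i"
  defines "n \<equiv> - (\<i> * e * cis t)"
  obtains c where "c > 0"
    "n \<bullet> vs ! i - n \<bullet> vs ! prev_idx vs i = (cmod e)^2 * sin t"
    "n \<bullet> vs ! next_idx vs i - n \<bullet> vs ! i = - ((cmod e)^2 * c * sin (turn_angle vs i - t))"
proof -
  obtain c where c: "c > 0" and next_edge: "vs ! next_idx vs i - vs ! i = e * (of_real c * cis (turn_angle vs i))"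
    using next_edge_turn[OF cv i] unfolding e_def by blast
  have "e = e * (of_real 1 * cis 0)" by simp
  then have "n \<bullet> e = (cmod e)^2 * sin t"
    using inner_normal_scaled_cis[of e t 1 0] by (simp add: n_def)
  moreover have "n \<bullet> (vs ! next_idx vs i - vs ! i) = - ((cmod e)^2 * c * sin (turn_angle vs i - t))"
    unfolding next_edge n_def by (rule inner_normal_scaled_cis)
  ultimately show ?thesis
    using that[OF c] by (simp add: e_def inner_diff_right)
qed

lemma vertex_maximizes_normal_cone:
  assumes cv: "convex_polygon vs" and i: "i < length vs"
    and "0 \<le> t" "t \<le> turn_angle vs i"
  shows "vertex_maximizes vs i (- (\<i> * (vs ! i - vs ! prev_idx vs i) * cis t))"
proof (rule inner_normal_edges[OF cv i, of t])
  fix c :: real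
  let ?e = "vs ! i - vs ! prev_idx vs i" and ?n = "- (\<i> * (vs ! i - vs ! prev_idx vs i) * cis t)"
  assume "c > 0" and edges: "?n \<bullet> vs ! i - ?n \<bullet> vs ! prev_idx vs i = (cmod ?e)^2 * sin t"
    "?n \<bullet> vs ! next_idx vs i - ?n \<bullet> vs ! i = - ((cmod ?e)^2 * c * sin (turn_angle vs i - t))"
  have "sin t \<ge> 0" "sin (turn_angle vs i - t) \<ge> 0"
    using assms turn_angle_bounds[OF cv i] by (auto intro!: sin_ge_zero)
  then have "(cmod ?e)^2 * sin t \<ge> 0" "(cmod ?e)^2 * c * sin (turn_angle vs i - t) \<ge> 0"
    using \<open>c > 0\<close> by simp_all
  then show ?thesis
    using edges by (intro vertex_maximizes_if_edges[OF cv i]) linarith+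
qed

lemma vertex_strictly_maximizes_normal_cone:
  assumes cv: "convex_polygon vs" and i: "i < length vs"
    and "0 < t" "t < turn_angle vs i"
  shows "vertex_strictly_maximizes vs i (- (\<i> * (vs ! i - vs ! prev_idx vs i) * cis t))"
proof (rule inner_normal_edges[OF cv i, of t])
  fix c :: real
  let ?e = "vs ! i - vs ! prev_idx vs i" and ?n = "- (\<i> * (vs ! i - vs ! prev_idx vs i) * cis t)"
  assume "c > 0" and edges: "?n \<bullet> vs ! i - ?n \<bullet> vs ! prev_idx vs i = (cmod ?e)^2 * sin t"
    "?n \<bullet> vs ! next_idx vs i - ?n \<bullet> vs ! i = - ((cmod ?e)^2 * c * sin (turn_angle vs i - t))"
  have "sin t > 0" "sin (turn_angle vs i - t) > 0"
    using assms turn_angle_bounds[OF cv i] by (auto intro!: sin_gt_zero)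
  moreover have "?e \<noteq> 0" using convex_polygon_edges_nonzero[OF cv i] by simp
  ultimately have "(cmod ?e)^2 * sin t > 0" "(cmod ?e)^2 * c * sin (turn_angle vs i - t) > 0"
    using \<open>c > 0\<close> by simp_all
  then show ?thesis
    using edges by (intro vertex_strictly_maximizes_if_edges[OF cv i]) linarith+
qed

lemma cross2_wedge_coords:
  "cross2 d (of_real a * d + of_real b * (d * cis \<omega>)) = b * (cmod d)^2 * sin \<omega>"
  "cross2 (d * cis \<omega>) (of_real a * d + of_real b * (d * cis \<omega>)) = - (a * (cmod d)^2 * sin \<omega>)"
  unfolding cmod_power2 by (simp_all add: cross2_def power2_eq_square algebra_simps)

lemma valid_probe_vertex_coords:
  assumes "valid_probe \<omega> vs q d" "i < length vs"
  obtains s t where "s \<ge> 0" "t \<ge> 0" "vs ! i = q + of_real s * d + of_real t * (d * cis \<omega>)"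
proof -
  have "vs ! i \<in> polygon_region vs"
    using assms(2) by (simp add: polygon_region_def hull_inc)
  then have "vs ! i \<in> wedge \<omega> q d"
    using assms(1) by (auto simp: valid_probe_def)
  then show ?thesis
    using that unfolding wedge_def by blast
qed

lemma vertex_on_first_ray:
  assumes vp: "valid_probe \<omega> vs q d" and \<omega>: "0 < \<omega>" "\<omega> < pi" and i: "i < length vs"
    and max: "vertex_maximizes vs i (- (\<i> * d))"
  shows "vs ! i \<in> ray q d"
proof -
  obtain x where "x \<in> ray q d" and x_region: "x \<in> polygon_region vs"
    using vp by (auto simp: valid_probe_def)
  then obtain u where x: "x = q + of_real u * d" by (auto simp: ray_def)
  obtain s t where "s \<ge> 0" "t \<ge> 0" and A: "vs ! i = q + of_real s * d + of_real t * (d * cis \<omega>)"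
    using valid_probe_vertex_coords[OF vp i] .
  have diff: "vs ! i - x = of_real (s - u) * d + of_real t * (d * cis \<omega>)"
    by (simp add: A x algebra_simps)
  have "(- (\<i> * d)) \<bullet> vs ! i - (- (\<i> * d)) \<bullet> x = - cross2 d (vs ! i - x)"
    by (simp add: cross2_eq_inner inner_diff_right)
  also have "\<dots> = - (t * (cmod d)^2 * sin \<omega>)"
    unfolding diff cross2_wedge_coords ..
  finally have "(- (\<i> * d)) \<bullet> vs ! i - (- (\<i> * d)) \<bullet> x = - (t * (cmod d)^2 * sin \<omega>)" .
  moreover have "(- (\<i> * d)) \<bullet> x \<le> (- (\<i> * d)) \<bullet> vs ! i"
    using vertex_maximizes_polygon_region[OF max x_region] .
  moreover have "(cmod d)^2 * sin \<omega> > 0"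
    using vp \<omega> by (simp add: valid_probe_def sin_gt_zero)
  ultimately have "t = 0"
    using \<open>t \<ge> 0\<close> by (smt (verit) mult_pos_pos mult.assoc)
  then show ?thesis
    using \<open>s \<ge> 0\<close> by (auto simp: A ray_def)
qed

lemma vertex_on_second_ray:
  assumes vp: "valid_probe \<omega> vs q d" and \<omega>: "0 < \<omega>" "\<omega> < pi" and i: "i < length vs"
    and max: "vertex_maximizes vs i (\<i> * (d * cis \<omega>))"
  shows "vs ! i \<in> ray q (d * cis \<omega>)"
proof -
  obtain x where "x \<in> ray q (d * cis \<omega>)" and x_region: "x \<in> polygon_region vs"
    using vp by (auto simp: valid_probe_def)
  then obtain u where x: "x = q + of_real u * (d * cis \<omega>)" by (auto simp: ray_def)
  obtain s t where "s \<ge> 0" "t \<ge> 0" and A: "vs ! i = q + of_real s * d + of_real t * (d * cis \<omega>)"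
    using valid_probe_vertex_coords[OF vp i] .
  have diff: "vs ! i - x = of_real s * d + of_real (t - u) * (d * cis \<omega>)"
    by (simp add: A x algebra_simps)
  have "(\<i> * (d * cis \<omega>)) \<bullet> vs ! i - (\<i> * (d * cis \<omega>)) \<bullet> x = cross2 (d * cis \<omega>) (vs ! i - x)"
    by (simp add: cross2_eq_inner inner_diff_right)
  also have "\<dots> = - (s * (cmod d)^2 * sin \<omega>)"
    unfolding diff cross2_wedge_coords ..
  finally have "(\<i> * (d * cis \<omega>)) \<bullet> vs ! i - (\<i> * (d * cis \<omega>)) \<bullet> x = - (s * (cmod d)^2 * sin \<omega>)" .
  moreover have "(\<i> * (d * cis \<omega>)) \<bullet> x \<le> (\<i> * (d * cis \<omega>)) \<bullet> vs ! i"
    using vertex_maximizes_polygon_region[OF max x_region] .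
  moreover have "(cmod d)^2 * sin \<omega> > 0"
    using vp \<omega> by (simp add: valid_probe_def sin_gt_zero)
  ultimately have "s = 0"
    using \<open>s \<ge> 0\<close> by (smt (verit) mult_pos_pos mult.assoc)
  then show ?thesis
    using \<open>t \<ge> 0\<close> by (auto simp: A ray_def)
qed

lemma vertex_normal_cone_arc:
  assumes cv: "convex_polygon vs" and i: "i < length vs" and "d \<noteq> 0"
  obtains \<beta> where "0 \<le> \<beta>" "\<beta> < 2 * pi"
    "\<And>t. 0 \<le> t \<Longrightarrow> t \<le> turn_angle vs i \<Longrightarrow> vertex_maximizes vs i (- (\<i> * d * cis (\<beta> + t)))"
    "\<And>t. 0 < t \<Longrightarrow> t < turn_angle vs i \<Longrightarrow> vertex_strictly_maximizes vs i (- (\<i> * d * cis (\<beta> + t)))"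
proof -
  let ?e = "vs ! i - vs ! prev_idx vs i"
  define \<beta> where "\<beta> = Arg2pi (?e / d)"
  define \<rho> where "\<rho> = cmod (?e / d)"
  have "\<rho> > 0"
    using convex_polygon_edges_nonzero[OF cv i] \<open>d \<noteq> 0\<close> by (simp add: \<rho>_def)
  have "?e / d = of_real \<rho> * cis \<beta>"
    using Arg2pi[of "?e / d"] by (simp add: \<beta>_def \<rho>_def is_Arg_def cis_conv_exp)
  then have "?e = d * (of_real \<rho> * cis \<beta>)"
    using \<open>d \<noteq> 0\<close> by (simp add: field_simps)
  then have normal: "- (\<i> * ?e * cis t) = of_real \<rho> * (- (\<i> * d * cis (\<beta> + t)))" for t
    by (simp add: cis_mult[symmetric] algebra_simps)
  show ?thesis
  proof
    show "0 \<le> \<beta>" "\<beta> < 2 * pi" using Arg2pi by (simp_all add: \<beta>_def)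
    show "vertex_maximizes vs i (- (\<i> * d * cis (\<beta> + t)))" if "0 \<le> t" "t \<le> turn_angle vs i" for t
      using vertex_maximizes_normal_cone[OF cv i that]
      unfolding normal vertex_maximizes_scale[OF \<open>\<rho> > 0\<close>] .
    show "vertex_strictly_maximizes vs i (- (\<i> * d * cis (\<beta> + t)))" if "0 < t" "t < turn_angle vs i" for t
      using vertex_strictly_maximizes_normal_cone[OF cv i that]
      unfolding normal vertex_strictly_maximizes_scale[OF \<open>\<rho> > 0\<close>] .
  qed
qed

lemma narrow_vertex_normal_arc:
  assumes cv: "convex_polygon vs" and vp: "valid_probe \<omega> vs q d"
    and \<omega>: "0 < \<omega>" "\<omega> < pi" and narrow: "narrow_vertex \<omega> vs i"
    and off_rays: "vs ! i \<notin> ray q d" "vs ! i \<notin> ray q (d * cis \<omega>)"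
  obtains \<beta> \<delta> where "0 < \<beta>" "\<beta> + \<delta> < pi + \<omega>" "pi - \<omega> \<le> \<delta>"
    "\<And>\<phi>. \<beta> < \<phi> \<Longrightarrow> \<phi> < \<beta> + \<delta> \<Longrightarrow> vertex_strictly_maximizes vs i (- (\<i> * d * cis \<phi>))"
proof -
  let ?\<delta> = "turn_angle vs i"
  have i: "i < length vs" using narrow by (simp add: narrow_vertex_def)
  have "d \<noteq> 0" using vp by (simp add: valid_probe_def)
  obtain \<beta> where \<beta>: "0 \<le> \<beta>" "\<beta> < 2 * pi"
    and max: "\<And>t. 0 \<le> t \<Longrightarrow> t \<le> ?\<delta> \<Longrightarrow> vertex_maximizes vs i (- (\<i> * d * cis (\<beta> + t)))"
    and strict: "\<And>t. 0 < t \<Longrightarrow> t < ?\<delta> \<Longrightarrow> vertex_strictly_maximizes vs i (- (\<i> * d * cis (\<beta> + t)))"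
    using vertex_normal_cone_arc[OF cv i \<open>d \<noteq> 0\<close>] by blast
  have wide: "pi - \<omega> \<le> ?\<delta>"
    using narrow internal_angle_turn_angle[OF cv i] by (simp add: narrow_vertex_def)
  have not_first: "\<not> (0 \<le> t \<and> t \<le> ?\<delta> \<and> cis (\<beta> + t) = 1)" for t
    using max[of t] vertex_on_first_ray[OF vp \<omega> i] off_rays(1) by auto
  have not_second: "\<not> (0 \<le> t \<and> t \<le> ?\<delta> \<and> \<beta> + t = pi + \<omega>)" for t
  proof
    assume "0 \<le> t \<and> t \<le> ?\<delta> \<and> \<beta> + t = pi + \<omega>"
    then have "vertex_maximizes vs i (- (\<i> * d * cis (pi + \<omega>)))" using max[of t] by simp
    moreover have "- (\<i> * d * cis (pi + \<omega>)) = \<i> * (d * cis \<omega>)"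
      by (simp add: cis_mult[symmetric])
    ultimately show False using vertex_on_second_ray[OF vp \<omega> i] off_rays(2) by simp
  qed
  have "\<beta> \<noteq> 0" using not_first[of 0] turn_angle_bounds[OF cv i] by auto
  with \<beta> have "0 < \<beta>" by simp
  moreover have "\<beta> + ?\<delta> < 2 * pi" using not_first[of "2 * pi - \<beta>"] \<beta> by force
  moreover have "\<beta> + ?\<delta> < pi + \<omega>"
    using not_second[of "pi + \<omega> - \<beta>"] \<open>\<beta> + ?\<delta> < 2 * pi\<close> wide by force
  ultimately show ?thesis
    using that[of \<beta> ?\<delta>] wide strict[of "\<phi> - \<beta>" for \<phi>] by force
qed

lemma card_disjoint_intervals_less:
  fixes a b :: "'a \<Rightarrow> real" and L lo hi :: real
  assumes "finite K" "K \<noteq> {}" "0 < L"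
    and "\<And>k. k \<in> K \<Longrightarrow> lo < a k \<and> a k + L \<le> b k \<and> b k \<le> hi"
    and "\<And>k l. k \<in> K \<Longrightarrow> l \<in> K \<Longrightarrow> k \<noteq> l \<Longrightarrow> b k \<le> a l \<or> b l \<le> a k"
  shows "card K * L < hi - lo"
  using assms
proof (induction K arbitrary: hi rule: finite_ranking_induct[where f = a])
  case empty
  then show ?case by simp
next
  case (insert k K)
  consider (single) "K = {}" | (dup) "k \<in> K" | (new) "K \<noteq> {}" "k \<notin> K" by blast
  then show ?case
  proof cases
    case single
    then show ?thesis using insert.prems(3)[of k] by simp
  next
    case dup
    then have "K \<noteq> {}" by blast
    with dup show ?thesis using insert.IH[of hi] insert.prems by (auto simp: insert_absorb)
  next
    case new
    have "b l \<le> a k" if "l \<in> K" for l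
      using insert.prems(3)[of l] insert.prems(3)[of k] insert.prems(4)[of k l] insert.hyps(2)[OF that]
        \<open>0 < L\<close> that new(2) by force
    then have "card K * L < a k - lo"
      using insert.IH[of "a k"] insert.prems new(1) by force
    then show ?thesis
      using insert.hyps(1) insert.prems(3)[of k] new(2) by (simp add: algebra_simps)
  qed
qed

lemma strictly_maximizing_arcs_disjoint:
  fixes n :: "real \<Rightarrow> complex"
  assumes "\<And>\<phi>. a < \<phi> \<Longrightarrow> \<phi> < b \<Longrightarrow> vertex_strictly_maximizes vs i (n \<phi>)"
    and "\<And>\<phi>. c < \<phi> \<Longrightarrow> \<phi> < e \<Longrightarrow> vertex_strictly_maximizes vs k (n \<phi>)"
    and "a < b" "c < e" "i < length vs" "k < length vs" "i \<noteq> k"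
  shows "b \<le> c \<or> e \<le> a"
proof (rule ccontr)
  assume "\<not> (b \<le> c \<or> e \<le> a)"
  then have "a < (max a c + min b e) / 2" "(max a c + min b e) / 2 < b"
    "c < (max a c + min b e) / 2" "(max a c + min b e) / 2 < e"
    using \<open>a < b\<close> \<open>c < e\<close> by (auto simp: max_def min_def)
  then show False
    using vertex_strictly_maximizes_unique assms by metis
qed

theorem lemma6p1:
  fixes \<omega> :: real and vs :: "complex list" and q d :: complex
  assumes "0 < \<omega>" and "\<omega> \<le> pi / 2"
    and "convex_polygon vs"
    and "card {i. narrow_vertex \<omega> vs i} = 3"
    and "valid_probe \<omega> vs q d"
  shows "\<exists>i. narrow_vertex \<omega> vs i \<and> vs ! i \<in> ray q d \<union> ray q (d * cis \<omega>)"
proof (rule ccontr)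
  assume off_rays: "\<not> ?thesis"
  let ?K = "{i. narrow_vertex \<omega> vs i}"
  have \<omega>: "0 < \<omega>" "\<omega> < pi" using assms(1,2) pi_gt_zero by linarith+
  have "\<forall>i\<in>?K. \<exists>\<beta> \<delta>. 0 < \<beta> \<and> \<beta> + \<delta> < pi + \<omega> \<and> pi - \<omega> \<le> \<delta> \<and>
      (\<forall>\<phi>. \<beta> < \<phi> \<longrightarrow> \<phi> < \<beta> + \<delta> \<longrightarrow> vertex_strictly_maximizes vs i (- (\<i> * d * cis \<phi>)))"
    using narrow_vertex_normal_arc[OF assms(3,5) \<omega>] off_rays by (metis (lifting) Un_iff mem_Collect_eq)
  then obtain \<beta> \<delta> where arc: "\<And>i. i \<in> ?K \<Longrightarrow> 0 < \<beta> i \<and> \<beta> i + \<delta> i < pi + \<omega> \<and> pi - \<omega> \<le> \<delta> i \<and>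
      (\<forall>\<phi>. \<beta> i < \<phi> \<longrightarrow> \<phi> < \<beta> i + \<delta> i \<longrightarrow> vertex_strictly_maximizes vs i (- (\<i> * d * cis \<phi>)))"
    by metis
  have "card ?K * (pi - \<omega>) < (pi + \<omega>) - 0"
  proof (rule card_disjoint_intervals_less[where a = \<beta> and b = "\<lambda>i. \<beta> i + \<delta> i"])
    show "finite ?K" "?K \<noteq> {}" using assms(4) card_gt_0_iff[of ?K] by simp_all
    show "0 < pi - \<omega>" using \<omega> by simp
    show "0 < \<beta> i \<and> \<beta> i + (pi - \<omega>) \<le> \<beta> i + \<delta> i \<and> \<beta> i + \<delta> i \<le> pi + \<omega>" if "i \<in> ?K" for i
      using arc[OF that] by simp
    show "\<beta> i + \<delta> i \<le> \<beta> k \<or> \<beta> k + \<delta> k \<le> \<beta> i" if "i \<in> ?K" "k \<in> ?K" "i \<noteq> k" for i k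
    proof (rule strictly_maximizing_arcs_disjoint[where n = "\<lambda>\<phi>. - (\<i> * d * cis \<phi>)"])
      show "i < length vs" "k < length vs" using that by (simp_all add: narrow_vertex_def)
    qed (use arc[OF that(1)] arc[OF that(2)] that \<omega> in auto)
  qed
  then show False using assms(2,4) by simp
qed

end
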